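(* Let $n\ge 3$ and $k\ge 1$, and let $H\in\mathcal{H}_k$. Then \[ \Gamma_{\rm S}(C_n,H)=kn+\left\lceil \frac{n}{3}\right\rceil . \]
   Context: $C_n$ is the cycle on $n$ vertices; $\gamma$ is the domination number. For $k\ge 1$, $\mathcal{H}_k$ is the class of all finite graphs $H$ with the following two properties: (a) $\gamma(H)=k+1$ and $\gamma(H-v)=k$ for every vertex $v\in V(H)$; (b) for all $x,y\in V(H)$ (where $x=y$ is allowed) there exists a minimum dominating set of $H$ containing both $x$ and $y$. For graphs $G,H$ and a function $f\colon V(G)\to V(H)$, the Sierpiński product $G\otimes_f H$ is the graph with vertex set $V(G)\times V(H)$ and edges of two types: (type 1) $(g,h)(g,h')$ for every $g\in V(G)$ and every edge $hh'\in E(H)$; (type 2) $(g,f(g'))(g',f(g))$ for every edge $gg'\in E(G)$. $\Gamma_{\rm S}(G,H)=\max_{f}\gamma(G\otimes_f H)$ over all functions $f\colon V(G)\to V(H)$. *)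

theory Defs
  imports Complex_Main "HOL-Library.FuncSet"
begin

type_synonym 'a graph = "'a set \<times> ('a \<Rightarrow> 'a \<Rightarrow> bool)"

definition verts :: "'a graph \<Rightarrow> 'a set" where "verts G = fst G"
definition adj :: "'a graph \<Rightarrow> 'a \<Rightarrow> 'a \<Rightarrow> bool" where "adj G = snd G"

definition simple_graph :: "'a graph \<Rightarrow> bool" where
  "simple_graph G \<longleftrightarrow> finite (verts G)
     \<and> (\<forall>u v. adj G u v \<longrightarrow> u \<in> verts G \<and> v \<in> verts G)
     \<and> (\<forall>u v. adj G u v \<longrightarrow> adj G v u)
     \<and> (\<forall>u. \<not> adj G u u)"

definition dominating_set :: "'a graph \<Rightarrow> 'a set \<Rightarrow> bool" where
  "dominating_set G D \<longleftrightarrow> D \<subseteq> verts G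
     \<and> (\<forall>v\<in>verts G. v \<in> D \<or> (\<exists>u\<in>D. adj G u v))"

definition domination_number :: "'a graph \<Rightarrow> nat" where
  "domination_number G = (LEAST m. \<exists>D. dominating_set G D \<and> card D = m)"

definition min_dominating_set :: "'a graph \<Rightarrow> 'a set \<Rightarrow> bool" where
  "min_dominating_set G D \<longleftrightarrow> dominating_set G D \<and> card D = domination_number G"

definition delete_vertex :: "'a graph \<Rightarrow> 'a \<Rightarrow> 'a graph" where
  "delete_vertex G v = (verts G - {v}, \<lambda>x y. adj G x y \<and> x \<noteq> v \<and> y \<noteq> v)"

definition cycle_graph :: "nat \<Rightarrow> nat graph" where
  "cycle_graph n = ({0..<n}, \<lambda>i j. i < n \<and> j < n \<and> (j = (i + 1) mod n \<or> i = (j + 1) mod n))"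

definition class_H :: "nat \<Rightarrow> 'a graph \<Rightarrow> bool" where
  "class_H k H \<longleftrightarrow> simple_graph H
     \<and> domination_number H = k + 1
     \<and> (\<forall>v\<in>verts H. domination_number (delete_vertex H v) = k)
     \<and> (\<forall>x\<in>verts H. \<forall>y\<in>verts H. \<exists>D. min_dominating_set H D \<and> x \<in> D \<and> y \<in> D)"

definition sierpinski_product :: "'a graph \<Rightarrow> 'b graph \<Rightarrow> ('a \<Rightarrow> 'b) \<Rightarrow> ('a \<times> 'b) graph" where
  "sierpinski_product G H f =
     (verts G \<times> verts H,
      \<lambda>x y. (fst x = fst y \<and> fst x \<in> verts G \<and> adj H (snd x) (snd y))
          \<or> (adj G (fst x) (fst y) \<and> snd x = f (fst y) \<and> snd y = f (fst x)))"

definition Gamma_S :: "'a graph \<Rightarrow> 'b graph \<Rightarrow> nat" where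
  "Gamma_S G H = Max ((\<lambda>f. domination_number (sierpinski_product G H f)) ` (verts G \<rightarrow>\<^sub>E verts H))"

end

theory Submission
  imports Defs
begin

text \<open>
  For \<open>H \<in> \<H>_k\<close> and any graph \<open>G\<close> of maximum degree at most two,
  \<open>\<Gamma>_S(G, H) = k |V(G)| + \<gamma>(G)\<close>; for \<open>G = C_n\<close> this is the theorem, as \<open>\<gamma>(C_n) = \<lceil>n/3\<rceil>\<close>.

  Lower bound: let \<open>f\<close> be constant with value \<open>c\<close>, so that only copies of \<open>c\<close> are joined
  to other layers. Every layer of a dominating set then dominates \<open>H - c\<close>, so has at least \<open>k\<close>
  vertices, and a layer that also dominates its own copy of \<open>c\<close> dominates \<open>H\<close>, so has at least
  \<open>k + 1\<close>. A layer that does not dominate its copy of \<open>c\<close> has it dominated from a neighbouring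
  layer, which must then contain \<open>c\<close>; so the larger layers index a dominating set of \<open>G\<close>.

  Upper bound, for arbitrary \<open>f\<close>: for a \<open>\<gamma>\<close>-set \<open>S\<close> of \<open>G\<close>, give each layer \<open>s \<in> S\<close> a
  \<open>\<gamma>\<close>-set of \<open>H\<close> containing the (at most two) values of \<open>f\<close> at the neighbours of \<open>s\<close>, and
  each other layer \<open>g\<close> a \<open>\<gamma>\<close>-set of \<open>H - f(s)\<close>, where \<open>s \<in> S\<close> is a neighbour of \<open>g\<close>.
\<close>

subsection \<open>Domination\<close>

lemma domination_number_le:
  assumes "dominating_set G D"
  shows "domination_number G \<le> card D"
  unfolding domination_number_def by (rule Least_le) (use assms in blast)

lemma min_dominating_set_exists: "\<exists>D. min_dominating_set G D"
proof -
  have "dominating_set G (verts G)"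
    unfolding dominating_set_def by auto
  then show ?thesis
    unfolding min_dominating_set_def domination_number_def
    using LeastI_ex[of "\<lambda>m. \<exists>D. dominating_set G D \<and> card D = m"] by blast
qed

lemma verts_nonempty_if_domination_number_pos:
  assumes "domination_number G > 0"
  shows "verts G \<noteq> {}"
proof
  assume "verts G = {}"
  then have "dominating_set G {}"
    unfolding dominating_set_def by auto
  with assms show False
    using domination_number_le by fastforce
qed

lemma verts_delete_vertex [simp]: "verts (delete_vertex H v) = verts H - {v}"
  by (simp add: verts_def delete_vertex_def)

lemma adj_delete_vertex [simp]: "adj (delete_vertex H v) x y \<longleftrightarrow> adj H x y \<and> x \<noteq> v \<and> y \<noteq> v"
  by (simp add: adj_def delete_vertex_def)

lemma dominating_set_delete_vertex_iff:
  "dominating_set (delete_vertex H c) D \<longleftrightarrow>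
     D \<subseteq> verts H - {c} \<and> (\<forall>v\<in>verts H - {c}. v \<in> D \<or> (\<exists>u\<in>D. adj H u v))"
  unfolding dominating_set_def by auto

lemma class_H_min_dominating_set_superset:
  assumes H: "class_H k H" and X: "X \<subseteq> verts H" "card X \<le> 2"
  shows "\<exists>D. min_dominating_set H D \<and> X \<subseteq> D"
proof (cases "X = {}")
  case True
  then show ?thesis using min_dominating_set_exists by blast
next
  case False
  have "finite X"
    using H X(1) finite_subset unfolding class_H_def simple_graph_def by blast
  then consider "card X = 1" | "card X = 2"
    using X(2) False by (cases "card X") (auto simp: le_Suc_eq)
  then obtain a b where "X = {a, b}" "a \<in> X" "b \<in> X"
    by cases (auto simp: card_1_singleton_iff card_2_iff)
  then show ?thesis
    using H X(1) unfolding class_H_def by (metis empty_subsetI insert_subset subsetD)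
qed

subsection \<open>Sierpinski products\<close>

lemma verts_sierpinski_product [simp]:
  "verts (sierpinski_product G H f) = verts G \<times> verts H"
  by (simp add: verts_def sierpinski_product_def)

lemma adj_sierpinski_product [simp]:
  "adj (sierpinski_product G H f) x y \<longleftrightarrow>
     (fst x = fst y \<and> fst x \<in> verts G \<and> adj H (snd x) (snd y))
     \<or> (adj G (fst x) (fst y) \<and> snd x = f (fst y) \<and> snd y = f (fst x))"
  by (simp add: adj_def sierpinski_product_def)

lemma dominating_set_sierpinski_product_iff:
  "dominating_set (sierpinski_product G H f) (Sigma (verts G) E) \<longleftrightarrow>
     (\<forall>g\<in>verts G. E g \<subseteq> verts H \<and>
        (\<forall>v\<in>verts H. v \<in> E g \<or> (\<exists>u\<in>E g. adj H u v)
           \<or> (\<exists>g'\<in>verts G. adj G g' g \<and> v = f g' \<and> f g \<in> E g')))"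
  unfolding dominating_set_def by (auto 0 4)

lemma sum_add_of_bool:
  fixes k :: nat
  assumes "finite A"
  shows "(\<Sum>a\<in>A. k + of_bool (a \<in> T)) = k * card A + card (A \<inter> T)"
  using assms by (simp add: sum.distrib)

lemma dominating_set_sierpinski_product_const_layers:
  assumes D: "dominating_set (sierpinski_product G H f) (Sigma (verts G) E)"
    and f: "\<And>g. g \<in> verts G \<Longrightarrow> f g = c" and c: "c \<in> verts H"
  shows "dominating_set G {g \<in> verts G. c \<in> E g \<or> (\<exists>u\<in>E g. adj H u c)}"
  unfolding dominating_set_def
proof (intro conjI ballI)
  fix g assume g: "g \<in> verts G"
  have "c \<in> E g \<or> (\<exists>u\<in>E g. adj H u c) \<or> (\<exists>g'\<in>verts G. adj G g' g \<and> f g \<in> E g')"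
    using D g c unfolding dominating_set_sierpinski_product_iff by blast
  then show "g \<in> {g \<in> verts G. c \<in> E g \<or> (\<exists>u\<in>E g. adj H u c)}
      \<or> (\<exists>t\<in>{g \<in> verts G. c \<in> E g \<or> (\<exists>u\<in>E g. adj H u c)}. adj G t g)"
    using g f[OF g] by blast
qed auto

lemma domination_number_sierpinski_product_const_ge:
  assumes finG: "finite (verts G)" and H: "class_H k H" and c: "c \<in> verts H"
    and f: "\<And>g. g \<in> verts G \<Longrightarrow> f g = c"
  shows "k * card (verts G) + domination_number G \<le> domination_number (sierpinski_product G H f)"
    (is "_ \<le> domination_number ?P")
proof -
  have finH: "finite (verts H)"
    and gH: "domination_number H = k + 1" and gHc: "domination_number (delete_vertex H c) = k"
    using H c unfolding class_H_def simple_graph_def by auto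
  obtain D where D: "min_dominating_set ?P D"
    using min_dominating_set_exists by blast
  define E where "E g = {h. (g, h) \<in> D}" for g
  have D_eq: "D = Sigma (verts G) E"
    using D unfolding min_dominating_set_def dominating_set_def E_def by auto
  with D have D_dom: "dominating_set ?P (Sigma (verts G) E)"
    unfolding min_dominating_set_def by simp
  then have dom: "E g \<subseteq> verts H \<and>
        (\<forall>v\<in>verts H. v \<in> E g \<or> (\<exists>u\<in>E g. adj H u v)
           \<or> (\<exists>g'\<in>verts G. adj G g' g \<and> v = c \<and> c \<in> E g'))" if "g \<in> verts G" for g
    using that f unfolding dominating_set_sierpinski_product_iff by fastforce
  define T where "T = {g \<in> verts G. c \<in> E g \<or> (\<exists>u\<in>E g. adj H u c)}"
  have layer: "k + of_bool (g \<in> T) \<le> card (E g)" if g: "g \<in> verts G" for g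
  proof (cases "g \<in> T")
    case True
    then have "dominating_set H (E g)"
      using dom[OF g] unfolding dominating_set_def T_def by blast
    then show ?thesis
      using True domination_number_le gH by fastforce
  next
    case False
    then have "dominating_set (delete_vertex H c) (E g)"
      using dom[OF g] g unfolding dominating_set_delete_vertex_iff T_def by blast
    then show ?thesis
      using False domination_number_le gHc by fastforce
  qed
  have "verts G \<inter> T = T"
    unfolding T_def by blast
  then have "domination_number G \<le> card (verts G \<inter> T)"
    using dominating_set_sierpinski_product_const_layers[OF D_dom f c] domination_number_le
    unfolding T_def by simp
  also have "k * card (verts G) + card (verts G \<inter> T) = (\<Sum>g\<in>verts G. k + of_bool (g \<in> T))"
    using finG by (simp add: sum_add_of_bool)
  also have "\<dots> \<le> (\<Sum>g\<in>verts G. card (E g))"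
    by (rule sum_mono) (rule layer)
  also have "\<dots> = card D"
    unfolding D_eq using finG finH dom by (subst card_SigmaI) (auto intro: finite_subset)
  finally show ?thesis
    using D unfolding min_dominating_set_def by linarith
qed

text \<open>The vertex \<open>(g, f (p g))\<close> missed by \<open>B g\<close> is dominated by \<open>(p g, f g) \<in> A (p g)\<close>.\<close>
lemma dominating_set_sierpinski_product_layers:
  assumes p: "\<And>g. g \<in> verts G - S \<Longrightarrow> p g \<in> S \<and> adj G (p g) g" and SG: "S \<subseteq> verts G"
    and A: "\<And>s. s \<in> S \<Longrightarrow> dominating_set H (A s) \<and> f ` {g. adj G s g} \<subseteq> A s"
    and B: "\<And>g. dominating_set (delete_vertex H (f (p g))) (B g)"
  shows "dominating_set (sierpinski_product G H f) (Sigma (verts G) (\<lambda>g. if g \<in> S then A g else B g))"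
  unfolding dominating_set_sierpinski_product_iff
proof (intro ballI conjI)
  fix g assume g: "g \<in> verts G"
  show "(if g \<in> S then A g else B g) \<subseteq> verts H"
    using A[of g] B[of g] unfolding dominating_set_def by auto
  fix v assume v: "v \<in> verts H"
  show "v \<in> (if g \<in> S then A g else B g) \<or> (\<exists>u\<in>(if g \<in> S then A g else B g). adj H u v)
    \<or> (\<exists>g'\<in>verts G. adj G g' g \<and> v = f g' \<and> f g \<in> (if g' \<in> S then A g' else B g'))"
  proof (cases "g \<in> S")
    case True
    then show ?thesis
      using A[OF True] v unfolding dominating_set_def by auto
  next
    case False
    with g p have ps: "p g \<in> S" "adj G (p g) g"
      by auto
    show ?thesis
    proof (cases "v = f (p g)")
      case True
      have "f g \<in> A (p g)"
        using A[OF ps(1)] ps(2) by auto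
      moreover have "p g \<in> verts G"
        using ps(1) SG by blast
      ultimately show ?thesis
        using True ps by auto
    next
      case False
      then show ?thesis
        using B[of g] v \<open>g \<notin> S\<close> unfolding dominating_set_delete_vertex_iff by auto
    qed
  qed
qed

lemma domination_number_sierpinski_product_le:
  assumes G: "simple_graph G" and deg: "\<And>g. g \<in> verts G \<Longrightarrow> card {g'. adj G g g'} \<le> 2"
    and H: "class_H k H" and f: "f \<in> verts G \<rightarrow> verts H"
  shows "domination_number (sierpinski_product G H f) \<le> k * card (verts G) + domination_number G"
proof -
  have finG: "finite (verts G)" and edges: "\<And>u v. adj G u v \<Longrightarrow> v \<in> verts G"
    using G unfolding simple_graph_def by auto
  have finH: "finite (verts H)" and gH: "domination_number H = k + 1"
    and gHv: "\<And>v. v \<in> verts H \<Longrightarrow> domination_number (delete_vertex H v) = k"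
    using H unfolding class_H_def simple_graph_def by auto
  obtain S where S: "min_dominating_set G S"
    using min_dominating_set_exists by blast
  have SG: "S \<subseteq> verts G"
    using S unfolding min_dominating_set_def dominating_set_def by blast
  have "\<exists>A. min_dominating_set H A \<and> f ` {g. adj G s g} \<subseteq> A" if "s \<in> S" for s
  proof (rule class_H_min_dominating_set_superset[OF H])
    have N: "{g. adj G s g} \<subseteq> verts G"
      using edges by blast
    then show "f ` {g. adj G s g} \<subseteq> verts H"
      using f by blast
    have "card (f ` {g. adj G s g}) \<le> card {g. adj G s g}"
      using finite_subset[OF N finG] by (rule card_image_le)
    then show "card (f ` {g. adj G s g}) \<le> 2"
      using deg[of s] that SG by auto
  qed
  then obtain A where A: "\<And>s. s \<in> S \<Longrightarrow> min_dominating_set H (A s) \<and> f ` {g. adj G s g} \<subseteq> A s"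
    by metis
  have "\<exists>s\<in>S. adj G s g" if "g \<in> verts G - S" for g
    using S that unfolding min_dominating_set_def dominating_set_def by blast
  then obtain p where p: "\<And>g. g \<in> verts G - S \<Longrightarrow> p g \<in> S \<and> adj G (p g) g"
    by metis
  have "\<forall>g. \<exists>B. min_dominating_set (delete_vertex H (f (p g))) B"
    using min_dominating_set_exists by blast
  then obtain B where B: "\<And>g. min_dominating_set (delete_vertex H (f (p g))) (B g)"
    by metis
  define E where "E g = (if g \<in> S then A g else B g)" for g
  have EH: "E g \<subseteq> verts H" for g
    using A[of g] B[of g] unfolding E_def min_dominating_set_def dominating_set_def by auto
  have "dominating_set (sierpinski_product G H f) (Sigma (verts G) E)"
    unfolding E_def using p SG A B
    by (intro dominating_set_sierpinski_product_layers) (auto simp: min_dominating_set_def)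
  then have "domination_number (sierpinski_product G H f) \<le> card (Sigma (verts G) E)"
    by (rule domination_number_le)
  also have "\<dots> = (\<Sum>g\<in>verts G. card (E g))"
    using finG finH EH by (subst card_SigmaI) (auto intro: finite_subset)
  also have "\<dots> = (\<Sum>g\<in>verts G. k + of_bool (g \<in> S))"
  proof (rule sum.cong)
    fix g assume g: "g \<in> verts G"
    show "card (E g) = k + of_bool (g \<in> S)"
    proof (cases "g \<in> S")
      case True
      then show ?thesis using A gH unfolding E_def min_dominating_set_def by simp
    next
      case False
      with g p SG f have "f (p g) \<in> verts H" by blast
      then show ?thesis
        using False B[of g] gHv unfolding E_def min_dominating_set_def by simp
    qed
  qed simp
  also have "\<dots> = k * card (verts G) + domination_number G"
    using finG S SG unfolding min_dominating_set_def by (simp add: sum_add_of_bool Int_absorb1)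
  finally show ?thesis .
qed

theorem Gamma_S_eq_if_degree_le_2:
  assumes G: "simple_graph G" and deg: "\<And>g. g \<in> verts G \<Longrightarrow> card {g'. adj G g g'} \<le> 2"
    and H: "class_H k H"
  shows "Gamma_S G H = k * card (verts G) + domination_number G"
proof -
  have finG: "finite (verts G)"
    using G unfolding simple_graph_def by simp
  have finH: "finite (verts H)" and "domination_number H = k + 1"
    using H unfolding class_H_def simple_graph_def by auto
  then have "verts H \<noteq> {}"
    by (intro verts_nonempty_if_domination_number_pos) simp
  then obtain c where c: "c \<in> verts H"
    by blast
  let ?\<gamma> = "\<lambda>f. domination_number (sierpinski_product G H f)"
  let ?c = "restrict (\<lambda>_. c) (verts G)"
  have upper: "?\<gamma> f \<le> k * card (verts G) + domination_number G" if "f \<in> verts G \<rightarrow>\<^sub>E verts H" for f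
    using that domination_number_sierpinski_product_le[OF G deg H] by blast
  have c_PiE: "?c \<in> verts G \<rightarrow>\<^sub>E verts H"
    using c by simp
  have "?\<gamma> ?c = k * card (verts G) + domination_number G"
    using domination_number_sierpinski_product_const_ge[OF finG H c, of ?c] upper[OF c_PiE] by simp
  then have "k * card (verts G) + domination_number G \<in> ?\<gamma> ` (verts G \<rightarrow>\<^sub>E verts H)"
    using c_PiE by (metis image_eqI)
  moreover have "finite (?\<gamma> ` (verts G \<rightarrow>\<^sub>E verts H))"
    using finG finH by (simp add: finite_PiE)
  ultimately show ?thesis
    unfolding Gamma_S_def using upper by (intro Max_eqI) auto
qed

subsection \<open>Cycles\<close>

lemma verts_cycle_graph [simp]: "verts (cycle_graph n) = {0..<n}"
  by (simp add: verts_def cycle_graph_def)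

lemma adj_cycle_graph:
  "adj (cycle_graph n) i j \<longleftrightarrow> i < n \<and> j < n \<and> (j = (i + 1) mod n \<or> i = (j + 1) mod n)"
  by (simp add: adj_def cycle_graph_def)

lemma adj_cycle_graph_iff:
  assumes "i < n"
  shows "adj (cycle_graph n) i j \<longleftrightarrow> j = (i + 1) mod n \<or> j = (i + n - 1) mod n"
proof -
  have succ: "(j + 1) mod n = (if j + 1 = n then 0 else j + 1)" if "j < n"
    using that by auto
  have pred: "(i + n - 1) mod n = (if i = 0 then n - 1 else i - 1)"
  proof (cases "i = 0")
    case False
    then have "(i + n - 1) mod n = (i - 1 + n) mod n"
      by (simp add: add.commute)
    also have "\<dots> = i - 1"
      using assms by simp
    finally show ?thesis
      using False by simp
  qed (use assms in simp)
  have "j < n \<and> i = (j + 1) mod n \<longleftrightarrow> j < n \<and> i = (if j + 1 = n then 0 else j + 1)"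
    using succ by auto
  also have "\<dots> \<longleftrightarrow> j = (i + n - 1) mod n"
    unfolding pred using assms by auto
  finally have pred_iff: "j < n \<and> i = (j + 1) mod n \<longleftrightarrow> j = (i + n - 1) mod n" .
  have "adj (cycle_graph n) i j \<longleftrightarrow> j = (i + 1) mod n \<or> (j < n \<and> i = (j + 1) mod n)"
    using assms by (auto simp: adj_cycle_graph)
  then show ?thesis
    by (simp only: pred_iff)
qed

lemma simple_graph_cycle_graph:
  assumes "n \<ge> 2"
  shows "simple_graph (cycle_graph n)"
  unfolding simple_graph_def
proof (intro conjI allI notI)
  fix u assume "adj (cycle_graph n) u u"
  then have "u < n" "u = (u + 1) mod n"
    by (auto simp: adj_cycle_graph)
  then show False
  proof (cases "u + 1 < n")
    case False
    with \<open>u < n\<close> have "u + 1 = n"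
      by simp
    with \<open>u = (u + 1) mod n\<close> assms show False
      by simp
  qed simp
qed (auto simp: adj_cycle_graph)

lemma card_neighbours_cycle_graph_le:
  assumes "i < n"
  shows "card {j. adj (cycle_graph n) i j} \<le> 2"
proof -
  have "{j. adj (cycle_graph n) i j} = {(i + 1) mod n, (i + n - 1) mod n}"
    using adj_cycle_graph_iff[OF assms] by blast
  then show ?thesis
    by (simp add: card_insert_if)
qed

lemma card_dominating_set_cycle_graph_ge:
  assumes "dominating_set (cycle_graph n) T"
  shows "n \<le> 3 * card T"
proof -
  have T: "T \<subseteq> {0..<n}" "finite T"
    using assms finite_subset unfolding dominating_set_def by auto
  have "{0..<n} \<subseteq> (\<Union>t\<in>T. {t, (t + 1) mod n, (t + n - 1) mod n})"
  proof
    fix g assume "g \<in> {0..<n}"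
    then have "g \<in> T \<or> (\<exists>t\<in>T. adj (cycle_graph n) t g)"
      using assms unfolding dominating_set_def by simp
    moreover have "g \<in> {t, (t + 1) mod n, (t + n - 1) mod n}" if "t \<in> T" "adj (cycle_graph n) t g" for t
      using that T(1) adj_cycle_graph_iff[of t n g] by auto
    ultimately show "g \<in> (\<Union>t\<in>T. {t, (t + 1) mod n, (t + n - 1) mod n})"
      by blast
  qed
  then have "n \<le> card (\<Union>t\<in>T. {t, (t + 1) mod n, (t + n - 1) mod n})"
    using T(2) card_mono[of "\<Union>t\<in>T. {t, (t + 1) mod n, (t + n - 1) mod n}" "{0..<n}"] by simp
  also have "\<dots> \<le> (\<Sum>t\<in>T. card {t, (t + 1) mod n, (t + n - 1) mod n})"
    by (rule card_UN_le[OF T(2)])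
  also have "\<dots> \<le> (\<Sum>t\<in>T. 3)"
    by (intro sum_mono) (simp add: card_insert_if)
  finally show ?thesis
    by simp
qed

lemma cycle_graph_near_multiple_of_3:
  assumes i: "i < n"
  shows "\<exists>u<n. u mod 3 = 0 \<and> (u = i \<or> adj (cycle_graph n) u i)"
proof -
  have "i mod 3 = 0 \<or> i mod 3 = 1 \<or> i mod 3 = 2 \<and> i + 1 < n \<or> i mod 3 = 2 \<and> i + 1 = n"
    using i by linarith
  then show ?thesis
  proof (elim disjE conjE)
    assume "i mod 3 = 0"
    then show ?thesis using i by (intro exI[of _ i]) simp
  next
    assume "i mod 3 = 1"
    then have "(i - 1) mod 3 = 0" "adj (cycle_graph n) (i - 1) i"
      using i by (presburger, simp add: adj_def cycle_graph_def)
    then show ?thesis using i by (intro exI[of _ "i - 1"]) simp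
  next
    assume "i mod 3 = 2" "i + 1 < n"
    then have "(i + 1) mod 3 = 0" "adj (cycle_graph n) (i + 1) i"
      by (presburger, simp add: adj_def cycle_graph_def)
    then show ?thesis using \<open>i + 1 < n\<close> by (intro exI[of _ "i + 1"]) simp
  next
    assume "i mod 3 = 2" "i + 1 = n"
    then have "adj (cycle_graph n) 0 i"
      by (simp add: adj_def cycle_graph_def)
    then show ?thesis using i by (intro exI[of _ 0]) simp
  qed
qed

lemma dominating_set_cycle_graph_multiples_of_3:
  "dominating_set (cycle_graph n) {i. i < n \<and> i mod 3 = 0}"
  unfolding dominating_set_def
proof (intro conjI ballI)
  fix i assume "i \<in> verts (cycle_graph n)"
  then obtain u where "u < n" "u mod 3 = 0" "u = i \<or> adj (cycle_graph n) u i"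
    using cycle_graph_near_multiple_of_3[of i n] by auto
  then show "i \<in> {i. i < n \<and> i mod 3 = 0} \<or> (\<exists>u\<in>{i. i < n \<and> i mod 3 = 0}. adj (cycle_graph n) u i)"
    by (metis (mono_tags, lifting) mem_Collect_eq)
qed auto

lemma card_multiples_of_3: "card {i. i < n \<and> i mod 3 = (0::nat)} = (n + 2) div 3"
proof -
  have "{i. i < n \<and> i mod 3 = (0::nat)} = (*) 3 ` {..<(n + 2) div 3}"
    by (auto simp: image_iff)
  then show ?thesis
    by (simp add: card_image inj_on_def)
qed

lemma domination_number_cycle_graph: "domination_number (cycle_graph n) = (n + 2) div 3"
proof (rule antisym)
  show "domination_number (cycle_graph n) \<le> (n + 2) div 3"
    using domination_number_le[OF dominating_set_cycle_graph_multiples_of_3] card_multiples_of_3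
    by simp
  obtain D where "min_dominating_set (cycle_graph n) D"
    using min_dominating_set_exists by blast
  then show "(n + 2) div 3 \<le> domination_number (cycle_graph n)"
    using card_dominating_set_cycle_graph_ge unfolding min_dominating_set_def by fastforce
qed

lemma nat_ceiling_divide_3: "nat \<lceil>real n / 3\<rceil> = (n + 2) div 3"
proof -
  have "\<lceil>real n / 3\<rceil> = - (- int n div 3)"
    using ceiling_divide_eq_div[of "int n" 3] by simp
  then show ?thesis
    by simp
qed

theorem theorem3p5:
  fixes n k :: nat and H :: "'a graph"
  assumes "n \<ge> 3" and "k \<ge> 1" and "class_H k H"
  shows "Gamma_S (cycle_graph n) H = k * n + nat \<lceil>real n / 3\<rceil>"
proof -
  have "Gamma_S (cycle_graph n) H = k * card (verts (cycle_graph n)) + domination_number (cycle_graph n)"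
    using assms(1,3) by (intro Gamma_S_eq_if_degree_le_2 simple_graph_cycle_graph)
      (auto intro: card_neighbours_cycle_graph_le)
  then show ?thesis
    by (simp add: domination_number_cycle_graph nat_ceiling_divide_3)
qed

end
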